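(* Let $P,Q$ be partially ordered sets, neither of which has an upper bound for the whole set (i.e. $P$ and $Q$ are unbounded). Suppose there exist functions $\varphi:P\to Q$ and $\psi:Q\to P$ such that for every $p\in P$ and $q\in Q$ either $p\le\psi(q)$ or $q\le\varphi(p)$. Then $\operatorname{add}(P)=\operatorname{cof}(P)=\operatorname{cof}(Q)=\operatorname{add}(Q)$.
   Context: For a partially ordered set $P$: $\operatorname{add}(P)$ is the smallest cardinality of a subset $A\subset P$ that has no upper bound in $P$ (i.e. for every $y\in P$ there is $x\in A$ with $x\not\le y$), and $\operatorname{cof}(P)$ is the smallest cardinality of a cofinal subset $A\subset P$ (i.e. for every $x\in P$ there is $y\in A$ with $x\le y$). *)

theory Defs
  imports Main
begin

text \<open>A partially ordered set is modelled as a type of class order (the whole type is the poset).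
Cardinalities are compared via card_of and the cardinal isomorphism ordIso2 (=o) of Main.\<close>

definition unbounded_set :: "'a::order set \<Rightarrow> bool" where
  "unbounded_set A \<longleftrightarrow> (\<forall>y. \<exists>x\<in>A. \<not> x \<le> y)"

definition cofinal_set :: "'a::order set \<Rightarrow> bool" where
  "cofinal_set A \<longleftrightarrow> (\<forall>x. \<exists>y\<in>A. x \<le> y)"

definition poset_add :: "'a::order itself \<Rightarrow> 'a rel" where
  "poset_add _ = (SOME r. \<exists>A::'a set. unbounded_set A \<and> r = card_of A \<and>
      (\<forall>B::'a set. unbounded_set B \<longrightarrow> ordLeq3 (card_of A) (card_of B)))"

definition poset_cof :: "'a::order itself \<Rightarrow> 'a rel" where
  "poset_cof _ = (SOME r. \<exists>A::'a set. cofinal_set A \<and> r = card_of A \<and>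
      (\<forall>B::'a set. cofinal_set B \<longrightarrow> ordLeq3 (card_of A) (card_of B)))"

end

theory Submission
  imports Defs
begin

text \<open>A cofinal subset of an unbounded poset is unbounded, so add(P) \<le> cof(P). Conversely the
  hypothesis on \<phi> and \<psi> makes \<psi> map every unbounded subset of Q onto a cofinal subset of P,
  so cof(P) \<le> add(Q); symmetrically cof(Q) \<le> add(P). The four inequalities close into a cycle
  add(P) \<le> cof(P) \<le> add(Q) \<le> cof(Q) \<le> add(P).\<close>

unbundle cardinal_syntax

lemma card_of_minimal_exists:
  assumes "S A\<^sub>0"
  shows "\<exists>A. S A \<and> (\<forall>B. S B \<longrightarrow> card_of A \<le>o card_of B)"
proof -
  obtain r where "r \<in> card_of ` Collect S" and "\<forall>r' \<in> card_of ` Collect S. r \<le>o r'"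
    using exists_minim_Well_order[of "card_of ` Collect S"] assms card_of_Well_order by blast
  then show ?thesis by blast
qed

lemma poset_add_eq_card_of_minimal:
  assumes "unbounded_set (B\<^sub>0 :: 'a::order set)"
  shows "\<exists>A::'a set. unbounded_set A \<and> poset_add TYPE('a) = card_of A \<and>
    (\<forall>B::'a set. unbounded_set B \<longrightarrow> card_of A \<le>o card_of B)"
proof -
  have "\<exists>r. \<exists>A::'a set. unbounded_set A \<and> r = card_of A \<and>
      (\<forall>B::'a set. unbounded_set B \<longrightarrow> card_of A \<le>o card_of B)"
    using card_of_minimal_exists[of unbounded_set, OF assms] by blast
  from someI_ex[OF this] show ?thesis
    unfolding poset_add_def .
qed

lemma poset_cof_eq_card_of_minimal:
  "\<exists>A::'a::order set. cofinal_set A \<and> poset_cof TYPE('a) = card_of A \<and>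
    (\<forall>B::'a set. cofinal_set B \<longrightarrow> card_of A \<le>o card_of B)"
proof -
  have "cofinal_set (UNIV :: 'a set)"
    unfolding cofinal_set_def by blast
  then have "\<exists>r. \<exists>A::'a set. cofinal_set A \<and> r = card_of A \<and>
      (\<forall>B::'a set. cofinal_set B \<longrightarrow> card_of A \<le>o card_of B)"
    using card_of_minimal_exists[of cofinal_set] by blast
  from someI_ex[OF this] show ?thesis
    unfolding poset_cof_def .
qed

lemma unbounded_set_if_cofinal:
  assumes "\<not> (\<exists>y::'a::order. \<forall>x. x \<le> y)" and "cofinal_set (C :: 'a set)"
  shows "unbounded_set C"
  unfolding unbounded_set_def
proof
  fix y :: 'a
  obtain x where "\<not> x \<le> y" using assms(1) by blast
  moreover obtain c where "c \<in> C" "x \<le> c"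
    using assms(2) unfolding cofinal_set_def by blast
  ultimately show "\<exists>c\<in>C. \<not> c \<le> y"
    using order_trans by blast
qed

lemma cofinal_set_image_if_unbounded:
  fixes \<phi> :: "'a::order \<Rightarrow> 'b::order" and \<psi> :: "'b \<Rightarrow> 'a"
  assumes "\<forall>p q. p \<le> \<psi> q \<or> q \<le> \<phi> p" and "unbounded_set B"
  shows "cofinal_set (\<psi> ` B)"
  unfolding cofinal_set_def
proof
  fix p
  obtain q where "q \<in> B" "\<not> q \<le> \<phi> p"
    using assms(2) unfolding unbounded_set_def by blast
  then show "\<exists>y\<in>\<psi> ` B. p \<le> y"
    using assms(1) by blast
qed

lemma poset_add_le_cof:
  assumes "\<not> (\<exists>y::'a::order. \<forall>x. x \<le> y)"
  shows "poset_add TYPE('a) \<le>o poset_cof TYPE('a)"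
proof -
  obtain C :: "'a set" where C: "cofinal_set C" "poset_cof TYPE('a) = card_of C"
    using poset_cof_eq_card_of_minimal by blast
  have "unbounded_set C"
    using unbounded_set_if_cofinal[OF assms C(1)] .
  then obtain A :: "'a set" where "poset_add TYPE('a) = card_of A" "card_of A \<le>o card_of C"
    using poset_add_eq_card_of_minimal by blast
  with C(2) show ?thesis by simp
qed

lemma poset_cof_le_add:
  fixes \<phi> :: "'a::order \<Rightarrow> 'b::order" and \<psi> :: "'b \<Rightarrow> 'a"
  assumes "\<forall>p q. p \<le> \<psi> q \<or> q \<le> \<phi> p" and "\<not> (\<exists>y::'b. \<forall>x. x \<le> y)"
  shows "poset_cof TYPE('a) \<le>o poset_add TYPE('b)"
proof -
  have "unbounded_set (UNIV :: 'b set)"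
    using unbounded_set_if_cofinal[OF assms(2)] unfolding cofinal_set_def by blast
  then obtain B :: "'b set" where B: "unbounded_set B" "poset_add TYPE('b) = card_of B"
    using poset_add_eq_card_of_minimal by blast
  obtain C :: "'a set" where C: "poset_cof TYPE('a) = card_of C" "card_of C \<le>o card_of (\<psi> ` B)"
    using poset_cof_eq_card_of_minimal cofinal_set_image_if_unbounded[OF assms(1) B(1)] by blast
  have "card_of C \<le>o card_of B"
    using C(2) card_of_image by (rule ordLeq_transitive)
  with B(2) C(1) show ?thesis by simp
qed

theorem lemma5p2:
  fixes \<phi> :: "'a::order \<Rightarrow> 'b::order" and \<psi> :: "'b \<Rightarrow> 'a"
  assumes "\<not> (\<exists>y::'a. \<forall>x::'a. x \<le> y)"
    and "\<not> (\<exists>y::'b. \<forall>x::'b. x \<le> y)"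
    and "\<forall>p q. p \<le> \<psi> q \<or> q \<le> \<phi> p"
  shows "ordIso2 (poset_add TYPE('a)) (poset_cof TYPE('a))
       \<and> ordIso2 (poset_cof TYPE('a)) (poset_cof TYPE('b))
       \<and> ordIso2 (poset_cof TYPE('b)) (poset_add TYPE('b))"
proof -
  have symmetric: "\<forall>q p. q \<le> \<phi> p \<or> p \<le> \<psi> q"
    using assms(3) by blast
  note addP_cofP = poset_add_le_cof[OF assms(1)]
    and cofP_addQ = poset_cof_le_add[OF assms(3,2)]
    and addQ_cofQ = poset_add_le_cof[OF assms(2)]
    and cofQ_addP = poset_cof_le_add[OF symmetric assms(1)]
  note chain = ordLeq_transitive[OF ordLeq_transitive]
  have "poset_cof TYPE('a) \<le>o poset_add TYPE('a)"
    using cofP_addQ addQ_cofQ cofQ_addP by (rule chain)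
  moreover have "poset_cof TYPE('b) \<le>o poset_cof TYPE('a)"
    using cofQ_addP addP_cofP by (rule ordLeq_transitive)
  moreover have "poset_cof TYPE('a) \<le>o poset_cof TYPE('b)"
    using cofP_addQ addQ_cofQ by (rule ordLeq_transitive)
  moreover have "poset_cof TYPE('b) \<le>o poset_add TYPE('b)"
    using cofQ_addP addP_cofP cofP_addQ by (rule chain)
  ultimately show ?thesis
    using addP_cofP addQ_cofQ by (simp add: ordIso_iff_ordLeq)
qed

end
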